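(* Consider the system $x_{k+1}=Ax_k+Bu_k$ with state constraint set $\mathcal{X}=\{x\mid C_x x\le c_x\}$ and input constraint set $\mathcal{U}=\{u\mid C_u u\le c_u\}$, controlled by a ReLU network $u_k=\mathcal{N}(x_k;\theta)$, so that $x_{k+1}=f_{\text{cl}}(x_k)$ with $f_{\text{cl}}(x)=Ax+B\mathcal{N}(x;\theta)$. Let $\mathcal{X}_{\text{in}}=\{x\in\mathbb{R}^{n_x}\mid C_{\text{in}}x\le c_{\text{in}}\}$ be a polytope with $\mathcal{X}_{\text{in}}\subseteq\mathcal{X}$. Define $c_u^*\in\mathbb{R}^{n_{cu}}$ by $c_u^{*(i)}=\max_{x\in\mathcal{X}_{\text{in}}}C_u^{(i)}\mathcal{N}(x;\theta)$ and $\mathcal{U}^*=\{u\mid C_u u\le c_u^*\}$. For a matrix $C_{\text{out}}\in\mathbb{R}^{n_{\text{out}}\times n_x}$, define $c_{\text{out}}^*\in\mathbb{R}^{n_{\text{out}}}$ by $c_{\text{out}}^{*(i)}=\max_{x\in\mathcal{X}_{\text{in}}}C_{\text{out}}^{(i)}f_{\text{cl}}(x)$ and $\mathcal{X}^*_{1,\text{out}}=\{x\mid C_{\text{out}}x\le c_{\text{out}}^*\}$. If $\mathcal{U}^*\subseteq\mathcal{U}$ and $\mathcal{X}^*_{1,\text{out}}\subseteq\mathcal{X}_{\text{in}}$, then $\mathcal{X}_{\text{in}}$ is an admissible control-invariant set for the closed loop, and for every $x_0\in\mathcal{X}_{\text{in}}$ the closed-loop trajectory satisfies $x_k\in\mathcal{X}$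 and $\mathcal{N}(x_k;\theta)\in\mathcal{U}$ for all $k\ge 0$.
   Context: $A\in\mathbb{R}^{n_x\times n_x}$, $B\in\mathbb{R}^{n_x\times n_u}$, $(A,B)$ stabilizable; $C_x\in\mathbb{R}^{n_{cx}\times n_x}$, $C_u\in\mathbb{R}^{n_{cu}\times n_u}$; $M^{(i)}$ denotes the $i$-th row of a matrix $M$ and $v^{(i)}$ the $i$-th entry of a vector. A ReLU network is $\mathcal{N}(x;\theta)=W_{L+1}\xi_L+b_{L+1}$ with $\xi_0=x$, $\xi_l=\max(0,W_l\xi_{l-1}+b_l)$ elementwise for $l=1,\dots,L$ (weights and biases of compatible dimensions, output in $\mathbb{R}^{n_u}$). A polytope $\mathcal{C}$ is an admissible control-invariant set for the closed loop if $\mathcal{N}(x;\theta)\in\mathcal{U}$ for all $x\in\mathcal{C}$ and $f_{\text{cl}}(\mathcal{C})\subseteq\mathcal{C}$. *)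

theory Defs
  imports "Jordan_Normal_Form.Spectral_Radius"
begin

definition vec_leq :: "real vec \<Rightarrow> real vec \<Rightarrow> bool" where
  "vec_leq x y \<longleftrightarrow> dim_vec x = dim_vec y \<and> (\<forall>i < dim_vec y. x $ i \<le> y $ i)"

definition hpoly :: "nat \<Rightarrow> real mat \<Rightarrow> real vec \<Rightarrow> real vec set" where
  "hpoly n C c = {x \<in> carrier_vec n. vec_leq (C *\<^sub>v x) c}"

definition stabilizable :: "real mat \<Rightarrow> real mat \<Rightarrow> bool" where
  "stabilizable A B \<longleftrightarrow>
     (\<exists>K \<in> carrier_mat (dim_col B) (dim_row A).
        spectral_radius (map_mat complex_of_real (A + B * K)) < 1)"

definition relu :: "real vec \<Rightarrow> real vec" where
  "relu v = map_vec (\<lambda>t. max 0 t) v"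

(* hidden layers given as list [(W_1,b_1),...,(W_L,b_L)]; output layer (W_{L+1}, b_{L+1}) *)
fun relu_hidden :: "(real mat \<times> real vec) list \<Rightarrow> real vec \<Rightarrow> real vec" where
  "relu_hidden [] \<xi> = \<xi>"
| "relu_hidden ((W, b) # ls) \<xi> = relu_hidden ls (relu (W *\<^sub>v \<xi> + b))"

definition relu_net ::
  "(real mat \<times> real vec) list \<Rightarrow> real mat \<Rightarrow> real vec \<Rightarrow> real vec \<Rightarrow> real vec" where
  "relu_net ls Wout bout x = Wout *\<^sub>v relu_hidden ls x + bout"

fun layers_wf :: "nat \<Rightarrow> (real mat \<times> real vec) list \<Rightarrow> nat" where
  "layers_wf d [] = d"
| "layers_wf d ((W, b) # ls) = layers_wf (dim_row W) ls"

fun hidden_wf :: "nat \<Rightarrow> (real mat \<times> real vec) list \<Rightarrow> bool" where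
  "hidden_wf d [] = True"
| "hidden_wf d ((W, b) # ls) \<longleftrightarrow>
     W \<in> carrier_mat (dim_row W) d \<and> b \<in> carrier_vec (dim_row W) \<and> hidden_wf (dim_row W) ls"

definition net_wf ::
  "nat \<Rightarrow> nat \<Rightarrow> (real mat \<times> real vec) list \<Rightarrow> real mat \<Rightarrow> real vec \<Rightarrow> bool" where
  "net_wf nx nu ls Wout bout \<longleftrightarrow> hidden_wf nx ls \<and>
     Wout \<in> carrier_mat nu (layers_wf nx ls) \<and> bout \<in> carrier_vec nu"

definition is_max_over :: "'a set \<Rightarrow> ('a \<Rightarrow> real) \<Rightarrow> real \<Rightarrow> bool" where
  "is_max_over S f v \<longleftrightarrow> (\<exists>x\<in>S. f x = v) \<and> (\<forall>x\<in>S. f x \<le> v)"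

definition admissible_ci ::
  "(real vec \<Rightarrow> real vec) \<Rightarrow> (real vec \<Rightarrow> real vec) \<Rightarrow> real vec set \<Rightarrow> real vec set \<Rightarrow> bool" where
  "admissible_ci N fcl U Cset \<longleftrightarrow> (\<forall>x\<in>Cset. N x \<in> U) \<and> fcl ` Cset \<subseteq> Cset"

end

theory Submission
  imports Defs
begin

text \<open>The row-wise maxima \<open>c\<^sub>u\<^sup>*\<close> and \<open>c\<^sub>o\<^sub>u\<^sub>t\<^sup>*\<close> are attained bounds, so the
  polytopes they define contain the images \<open>\<N>(X\<^sub>i\<^sub>n)\<close> and \<open>f\<^sub>c\<^sub>l(X\<^sub>i\<^sub>n)\<close>. Hence
  \<open>\<N>(X\<^sub>i\<^sub>n) \<subseteq> U\<^sup>* \<subseteq> U\<close> and \<open>f\<^sub>c\<^sub>l(X\<^sub>i\<^sub>n) \<subseteq> X\<^sup>*\<^sub>1\<^sub>,\<^sub>o\<^sub>u\<^sub>t \<subseteq> X\<^sub>i\<^sub>n\<close>, so \<open>X\<^sub>i\<^sub>n\<close> is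
  admissible and invariant, and every trajectory starting in it stays in
  \<open>X\<^sub>i\<^sub>n \<subseteq> X\<close>.\<close>

lemma relu_carrier_vec: "v \<in> carrier_vec n \<Longrightarrow> relu v \<in> carrier_vec n"
  unfolding relu_def by simp

lemma relu_hidden_carrier_vec:
  "hidden_wf d ls \<Longrightarrow> x \<in> carrier_vec d \<Longrightarrow> relu_hidden ls x \<in> carrier_vec (layers_wf d ls)"
proof (induction ls arbitrary: d x)
  case Nil
  then show ?case by simp
next
  case (Cons layer ls)
  obtain W b where layer: "layer = (W, b)" by fastforce
  with Cons.prems have W: "W \<in> carrier_mat (dim_row W) d" and b: "b \<in> carrier_vec (dim_row W)"
    and wf: "hidden_wf (dim_row W) ls"
    by simp_all
  from W b Cons.prems(2) have "relu (W *\<^sub>v x + b) \<in> carrier_vec (dim_row W)"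
    by (intro relu_carrier_vec add_carrier_vec mult_mat_vec_carrier)
  with Cons.IH[OF wf] show ?case
    by (simp only: layer relu_hidden.simps layers_wf.simps)
qed

lemma relu_net_carrier_vec:
  assumes "net_wf nx nu ls Wout bout" and "x \<in> carrier_vec nx"
  shows "relu_net ls Wout bout x \<in> carrier_vec nu"
  using assms relu_hidden_carrier_vec[of nx ls x]
  unfolding net_wf_def relu_net_def by auto

lemma hpoly_memI:
  assumes "v \<in> carrier_vec n" and "C \<in> carrier_mat m n" and "c \<in> carrier_vec m"
    and "\<And>i. i < m \<Longrightarrow> row C i \<bullet> v \<le> c $ i"
  shows "v \<in> hpoly n C c"
  using assms unfolding hpoly_def vec_leq_def by auto

lemma is_max_over_upper: "is_max_over S g v \<Longrightarrow> x \<in> S \<Longrightarrow> g x \<le> v"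
  unfolding is_max_over_def by blast

lemma image_subset_hpoly_of_row_maxima:
  assumes "\<And>x. x \<in> S \<Longrightarrow> f x \<in> carrier_vec n"
    and "C \<in> carrier_mat m n" and "c \<in> carrier_vec m"
    and "\<forall>i < m. is_max_over S (\<lambda>x. row C i \<bullet> f x) (c $ i)"
  shows "f ` S \<subseteq> hpoly n C c"
  using assms by (auto intro!: hpoly_memI dest: is_max_over_upper)

lemma funpow_in_invariant_set:
  assumes "f ` S \<subseteq> S" and "x \<in> S"
  shows "(f ^^ k) x \<in> S"
  using assms by (induction k) auto

lemma admissible_ci_trajectory:
  assumes "admissible_ci N f U S" and "S \<subseteq> X" and "x0 \<in> S"
  shows "(f ^^ k) x0 \<in> X \<and> N ((f ^^ k) x0) \<in> U"
proof -
  from assms(1) have invariant: "f ` S \<subseteq> S" and N_U: "\<forall>x\<in>S. N x \<in> U"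
    unfolding admissible_ci_def by auto
  from invariant assms(3) have "(f ^^ k) x0 \<in> S"
    by (rule funpow_in_invariant_set)
  with assms(2) N_U show ?thesis by blast
qed

theorem lemma1:
  fixes nx nu ncx ncu nin nout :: nat
    and A B Cx Cu Cin Cout Wout :: "real mat"
    and cx cu cin bout cu_star cout_star :: "real vec"
    and ls :: "(real mat \<times> real vec) list"
  defines "N \<equiv> relu_net ls Wout bout"
    and "fcl \<equiv> (\<lambda>x. A *\<^sub>v x + B *\<^sub>v relu_net ls Wout bout x)"
    and "X \<equiv> hpoly nx Cx cx"
    and "U \<equiv> hpoly nu Cu cu"
    and "Xin \<equiv> hpoly nx Cin cin"
    and "Ustar \<equiv> hpoly nu Cu cu_star"
    and "Xout \<equiv> hpoly nx Cout cout_star"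
  assumes A: "A \<in> carrier_mat nx nx"
    and B: "B \<in> carrier_mat nx nu"
    and stab: "stabilizable A B"
    and Cx: "Cx \<in> carrier_mat ncx nx" and cx: "cx \<in> carrier_vec ncx"
    and Cu: "Cu \<in> carrier_mat ncu nu" and cu: "cu \<in> carrier_vec ncu"
    and Cin: "Cin \<in> carrier_mat nin nx" and cin: "cin \<in> carrier_vec nin"
    and Cout: "Cout \<in> carrier_mat nout nx"
    and net: "net_wf nx nu ls Wout bout"
    and Xin_sub: "Xin \<subseteq> X"
    and cu_star: "cu_star \<in> carrier_vec ncu"
    and cu_star_max: "\<forall>i < ncu. is_max_over Xin (\<lambda>x. row Cu i \<bullet> N x) (cu_star $ i)"
    and cout_star: "cout_star \<in> carrier_vec nout"
    and cout_star_max: "\<forall>i < nout. is_max_over Xin (\<lambda>x. row Cout i \<bullet> fcl x) (cout_star $ i)"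
    and U_sub: "Ustar \<subseteq> U"
    and Xout_sub: "Xout \<subseteq> Xin"
  shows "admissible_ci N fcl U Xin \<and>
         (\<forall>x0 \<in> Xin. \<forall>k::nat. (fcl ^^ k) x0 \<in> X \<and> N ((fcl ^^ k) x0) \<in> U)"
proof -
  have Xin_carrier: "x \<in> carrier_vec nx" if "x \<in> Xin" for x
    using that unfolding Xin_def hpoly_def by blast
  have N_carrier: "N x \<in> carrier_vec nu" if "x \<in> Xin" for x
    unfolding N_def using net Xin_carrier[OF that] by (rule relu_net_carrier_vec)
  have "fcl x \<in> carrier_vec nx" if "x \<in> Xin" for x
    unfolding fcl_def using A B Xin_carrier[OF that] N_carrier[OF that, unfolded N_def]
    by (intro add_carrier_vec mult_mat_vec_carrier)
  then have "fcl ` Xin \<subseteq> Xout"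
    unfolding Xout_def using Cout cout_star cout_star_max by (rule image_subset_hpoly_of_row_maxima)
  with Xout_sub have invariant: "fcl ` Xin \<subseteq> Xin" by blast
  have "N ` Xin \<subseteq> Ustar"
    unfolding Ustar_def using N_carrier Cu cu_star cu_star_max by (rule image_subset_hpoly_of_row_maxima)
  with U_sub have admissible: "\<forall>x\<in>Xin. N x \<in> U" by blast
  from admissible invariant have ci: "admissible_ci N fcl U Xin"
    unfolding admissible_ci_def by blast
  moreover have "\<forall>x0 \<in> Xin. \<forall>k::nat. (fcl ^^ k) x0 \<in> X \<and> N ((fcl ^^ k) x0) \<in> U"
    using ci Xin_sub by (intro ballI allI) (rule admissible_ci_trajectory)
  ultimately show ?thesis ..
qed

end
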